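(* Let $\alpha,\beta,c_3,c_6,v$ be independent indeterminates and take $\mu_1=\mu_2=\mu_4=0$, $\mu_3=\alpha v+c_3$, $\mu_6=\beta v+c_6$. Then $s(t;\mu(v))$ is a power series in $\tau=t^3$, $s(t;\mu(v))=S(t^3,v)$, and $S(\tau,v)$ satisfies \[ \frac{\partial S}{\partial v}=(\alpha S^2+\beta S^3)\frac{\partial S}{\partial\tau}, \] with $S(\tau,0)=s_0(\tau)$, where $s_0(\tau)$ is the power series with $s_0(0)=0$ defined by $s_0=\tau+c_3s_0^2+c_6s_0^3$.
   Context: For parameters $\mu=(\mu_1,\mu_2,\mu_3,\mu_4,\mu_6)$, $s(t;\mu)$ denotes the unique formal power series in $t$ with $s(0;\mu)=0$ satisfying $s=t^3+\mu_1ts+\mu_2t^2s+\mu_3s^2+\mu_4ts^2+\mu_6s^3$ (the cubic $y^2+\mu_1xy+\mu_3y=x^3+\mu_2x^2+\mu_4x+\mu_6$ in Tate coordinates $t=-x/y$, $s=-1/y$). *)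

theory Defs
  imports "HOL-Computational_Algebra.Formal_Power_Series"
begin

definition tate_s :: "'a::comm_ring_1 \<Rightarrow> 'a \<Rightarrow> 'a \<Rightarrow> 'a \<Rightarrow> 'a \<Rightarrow> 'a fps" where
  "tate_s mu1 mu2 mu3 mu4 mu6 =
     (THE s. fps_nth s 0 = 0 \<and>
        s = fps_X ^ 3 + fps_const mu1 * fps_X * s + fps_const mu2 * fps_X ^ 2 * s
            + fps_const mu3 * s ^ 2 + fps_const mu4 * fps_X * s ^ 2 + fps_const mu6 * s ^ 3)"

definition s0_series :: "'a::comm_ring_1 \<Rightarrow> 'a \<Rightarrow> 'a fps" where
  "s0_series c3 c6 =
     (THE s. fps_nth s 0 = 0 \<and> s = fps_X + fps_const c3 * s ^ 2 + fps_const c6 * s ^ 3)"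

text \<open>Bivariate series S(tau,v) are modelled as 'a fps fps: the outer variable is tau,
the coefficients are power series in v.  Partial derivative in v, and specialization v = 0:\<close>
definition deriv_v :: "'a::comm_ring_1 fps fps \<Rightarrow> 'a fps fps" where
  "deriv_v S = Abs_fps (\<lambda>n. fps_deriv (fps_nth S n))"

definition at_v0 :: "'a::comm_ring_1 fps fps \<Rightarrow> 'a fps" where
  "at_v0 S = Abs_fps (\<lambda>n. fps_nth (fps_nth S n) 0)"

end

theory Submission
  imports Defs "HOL-Analysis.Elementary_Metric_Spaces"
begin

(* S(tau, v) is s0_series taken over the coefficient ring of power series in v, i.e. the unique
   series with S(0) = 0 and S = tau + A S^2 + B S^3, where A = alpha v + c3 and B = beta v + c6.
   Substituting tau = t^3 turns this cubic into the Tate equation for s, and setting v = 0 turns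
   it into the cubic defining s_0.  Differentiating the cubic in v and in tau gives
   S_v F = A' S^2 + B' S^3 and S_tau F = 1 with F = 1 - 2 A S - 3 B S^2, so
   S_v = (alpha S^2 + beta S^3) S_tau without ever inverting F.
   Existence and uniqueness of solutions of such cubics follow from Banach's fixed point theorem
   for the X-adic metric: on series without constant term, s |-> c + a s^2 + b s^3 halves
   distances, because the difference of two values is divisible by the difference of the
   arguments times a series without constant term. *)

unbundle fps_syntax

lemma dist_fps_mult_le_half:
  fixes f g f' g' h :: "'a::comm_ring_1 fps"
  assumes diff: "f' - g' = (f - g) * h" and h0: "h $ 0 = 0"
  shows "dist f' g' \<le> dist f g / 2"
proof (cases "f' = g'")
  case True
  then show ?thesis by (simp add: dist_fps_ge0)
next
  case False
  then have nz: "(f - g) * h \<noteq> 0"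
    unfolding diff[symmetric] by simp
  then have "f \<noteq> g" "h \<noteq> 0" by auto
  have "subdegree h \<noteq> 0"
    using h0 nth_subdegree_nonzero[OF \<open>h \<noteq> 0\<close>] by (cases "subdegree h") auto
  then have "subdegree (f - g) + 1 \<le> subdegree (f' - g')"
    using fps_mult_subdegree_ge[OF nz] unfolding diff by simp
  then have "inverse (2 ^ subdegree (f' - g')) \<le> (inverse (2 ^ (subdegree (f - g) + 1)) :: real)"
    by (intro le_imp_inverse_le power_increasing) auto
  moreover have "dist f' g' = inverse (2 ^ subdegree (f' - g'))"
    using False by (simp add: dist_fps_def)
  moreover have "dist f g / 2 = inverse (2 ^ (subdegree (f - g) + 1))"
    using \<open>f \<noteq> g\<close> by (simp add: dist_fps_def)
  ultimately show ?thesis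
    by simp
qed

lemma closed_fps_nth_eq: "closed {f :: 'a::group_add fps. f $ n = c}"
  unfolding closed_def open_fps_def
proof (intro ballI exI conjI)
  fix f :: "'a fps" assume f: "f \<in> - {f. f $ n = c}"
  show "{g. dist g f < inverse (2 ^ n)} \<subseteq> - {f. f $ n = c}"
  proof
    fix g assume "g \<in> {g. dist g f < inverse (2 ^ n)}"
    then have "g $ n = f $ n"
      using dist_less_imp_nth_equal[of g f n n] by simp
    then show "g \<in> - {f. f $ n = c}"
      using f by simp
  qed
qed simp

lemma cubic_fps_fixpoint_unique:
  fixes c :: "'a::comm_ring_1 fps"
  assumes c0: "c $ 0 = 0"
  shows "\<exists>!s. s $ 0 = 0 \<and> s = c + fps_const a * s ^ 2 + fps_const b * s ^ 3"
proof -
  define T where "T s = c + fps_const a * s ^ 2 + fps_const b * s ^ 3" for s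
  have "\<exists>!s\<in>{s. s $ 0 = 0}. T s = s"
  proof (rule Banach_fix)
    show "complete {s :: 'a fps. s $ 0 = 0}"
      by (simp add: complete_eq_closed closed_fps_nth_eq)
    show "{s :: 'a fps. s $ 0 = 0} \<noteq> {}"
      by (auto intro: exI[of _ 0])
    show "T ` {s. s $ 0 = 0} \<subseteq> {s. s $ 0 = 0}"
      using c0 by (auto simp: T_def power2_eq_square power3_eq_cube)
    fix f g :: "'a fps" assume "f \<in> {s. s $ 0 = 0}" "g \<in> {s. s $ 0 = 0}"
    then have "(fps_const a * (f + g) + fps_const b * (f ^ 2 + f * g + g ^ 2)) $ 0 = 0"
      by (simp add: power2_eq_square)
    moreover have "T f - T g = (f - g) * (fps_const a * (f + g) + fps_const b * (f ^ 2 + f * g + g ^ 2))"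
      by (simp add: T_def algebra_simps power2_eq_square power3_eq_cube)
    ultimately show "dist (T f) (T g) \<le> 1 / 2 * dist f g"
      using dist_fps_mult_le_half[of "T f" "T g" f g] by simp
  qed auto
  then show ?thesis
    unfolding T_def[symmetric] by (simp only: mem_Collect_eq eq_commute)
qed

lemma cubic_fps_the:
  fixes c u :: "'a::comm_ring_1 fps"
  assumes "c $ 0 = 0" "u $ 0 = 0" "u = c + fps_const a * u ^ 2 + fps_const b * u ^ 3"
  shows "(THE s. s $ 0 = 0 \<and> s = c + fps_const a * s ^ 2 + fps_const b * s ^ 3) = u"
  using assms by (intro the1_equality cubic_fps_fixpoint_unique) auto

lemma s0_series_fixpoint:
  "s0_series a b $ 0 = 0 \<and>
   s0_series a b = fps_X + fps_const a * s0_series a b ^ 2 + fps_const b * s0_series a b ^ 3"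
  unfolding s0_series_def by (rule theI'[OF cubic_fps_fixpoint_unique]) simp

lemma fps_compose_X_power_nth:
  fixes f :: "'a::comm_ring_1 fps"
  assumes "0 < k"
  shows "(f oo fps_X ^ k) $ n = (if k dvd n then f $ (n div k) else 0)"
proof -
  have "(f oo fps_X ^ k) $ n = (\<Sum>i = 0..n. if i = n div k \<and> k dvd n then f $ i else 0)"
    unfolding fps_compose_nth power_mult[symmetric] fps_X_power_nth
    by (intro sum.cong) (use assms in auto)
  also have "\<dots> = (if k dvd n then f $ (n div k) else 0)"
    by simp
  finally show ?thesis .
qed

lemma fps_compose_X_power_mult:
  fixes f g :: "'a::comm_ring_1 fps"
  assumes k: "0 < k"
  shows "(f * g) oo fps_X ^ k = (f oo fps_X ^ k) * (g oo fps_X ^ k)"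
proof (rule fps_ext)
  fix n
  let ?F = "f oo fps_X ^ k" and ?G = "g oo fps_X ^ k"
  show "((f * g) oo fps_X ^ k) $ n = (?F * ?G) $ n"
  proof (cases "k dvd n")
    case True
    then obtain m where n: "n = k * m" by blast
    have "(?F * ?G) $ n = (\<Sum>i \<in> (*) k ` {0..m}. ?F $ i * ?G $ (n - i))"
      unfolding fps_mult_nth
    proof (rule sum.mono_neutral_right)
      show "\<forall>i\<in>{0..n} - (*) k ` {0..m}. ?F $ i * ?G $ (n - i) = 0"
        using k by (auto simp: fps_compose_X_power_nth n)
    qed (use k in \<open>auto simp: n\<close>)
    also have "\<dots> = (\<Sum>j = 0..m. ?F $ (k * j) * ?G $ (k * m - k * j))"
      using k by (simp add: sum.reindex inj_on_def n)
    also have "\<dots> = (\<Sum>j = 0..m. f $ j * g $ (m - j))"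
      using k by (simp add: fps_compose_X_power_nth flip: diff_mult_distrib2)
    also have "\<dots> = ((f * g) oo fps_X ^ k) $ n"
      using k by (simp add: fps_compose_X_power_nth n fps_mult_nth)
    finally show ?thesis ..
  next
    case False
    have "?F $ i * ?G $ (n - i) = 0" if "i \<le> n" for i
    proof -
      have "\<not> (k dvd i \<and> k dvd (n - i))"
        using False that by (metis dvd_add le_add_diff_inverse)
      then show ?thesis
        using k by (cases "k dvd i") (simp_all add: fps_compose_X_power_nth)
    qed
    then show ?thesis
      using False k by (simp add: fps_mult_nth fps_compose_X_power_nth)
  qed
qed

lemma fps_compose_X_power_power:
  fixes f :: "'a::comm_ring_1 fps"
  assumes "0 < k"
  shows "f ^ m oo fps_X ^ k = (f oo fps_X ^ k) ^ m"
  by (induction m) (simp_all add: fps_compose_X_power_mult[OF assms])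

lemma tate_s_eq_s0_series_compose:
  fixes a b :: "'a::comm_ring_1"
  shows "tate_s 0 0 a 0 b = s0_series a b oo fps_X ^ 3"
proof -
  let ?S = "s0_series a b" and ?D = "s0_series a b oo fps_X ^ 3"
  have "?D = (fps_X + fps_const a * ?S ^ 2 + fps_const b * ?S ^ 3) oo fps_X ^ 3"
    using conjunct2[OF s0_series_fixpoint[of a b]] by (rule arg_cong)
  also have "\<dots> = fps_X ^ 3 + fps_const a * ?D ^ 2 + fps_const b * ?D ^ 3"
    by (simp add: fps_compose_add_distrib fps_compose_X_power_power flip: fps_const_mult_apply_left)
  finally have "?D = fps_X ^ 3 + fps_const a * ?D ^ 2 + fps_const b * ?D ^ 3" .
  moreover have "?D $ 0 = 0"
    using s0_series_fixpoint[of a b] by simp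
  ultimately show ?thesis
    unfolding tate_s_def by (simp add: cubic_fps_the)
qed

lemma at_v0_add: "at_v0 (F + G) = at_v0 F + at_v0 G"
  by (simp add: at_v0_def fps_eq_iff)

lemma at_v0_mult: "at_v0 (F * G) = at_v0 F * at_v0 G"
  by (simp add: at_v0_def fps_eq_iff fps_mult_nth fps_sum_nth)

lemma at_v0_fps_X: "at_v0 (fps_X :: 'a::comm_ring_1 fps fps) = fps_X"
  by (simp add: at_v0_def fps_eq_iff fps_X_def)

lemma at_v0_fps_const: "at_v0 (fps_const A) = fps_const (A $ 0)"
  by (simp add: at_v0_def fps_eq_iff fps_const_def)

lemma deriv_v_add: "deriv_v (F + G) = deriv_v F + deriv_v G"
  by (simp add: deriv_v_def fps_eq_iff)

lemma deriv_v_mult: "deriv_v (F * G) = deriv_v F * G + F * deriv_v G"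
  by (simp add: deriv_v_def fps_eq_iff fps_mult_nth fps_deriv_sum sum.distrib add_ac)

lemma deriv_v_fps_X: "deriv_v (fps_X :: 'a::comm_ring_1 fps fps) = 0"
  by (simp add: deriv_v_def fps_eq_iff fps_X_def)

lemma deriv_v_fps_const: "deriv_v (fps_const A) = fps_const (fps_deriv A)"
  by (simp add: deriv_v_def fps_eq_iff fps_const_def)

lemma at_v0_s0_series:
  fixes A B :: "'a::comm_ring_1 fps"
  shows "at_v0 (s0_series A B) = s0_series (A $ 0) (B $ 0)"
proof -
  let ?S = "s0_series A B"
  have "at_v0 ?S = at_v0 (fps_X + fps_const A * ?S ^ 2 + fps_const B * ?S ^ 3)"
    using conjunct2[OF s0_series_fixpoint[of A B]] by (rule arg_cong)
  also have "\<dots> = fps_X + fps_const (A $ 0) * at_v0 ?S ^ 2 + fps_const (B $ 0) * at_v0 ?S ^ 3"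
    by (simp add: at_v0_add at_v0_mult at_v0_fps_X at_v0_fps_const power2_eq_square power3_eq_cube)
  finally have "at_v0 ?S = fps_X + fps_const (A $ 0) * at_v0 ?S ^ 2 + fps_const (B $ 0) * at_v0 ?S ^ 3" .
  moreover have "at_v0 ?S $ 0 = 0"
    using s0_series_fixpoint[of A B] by (simp add: at_v0_def)
  ultimately show ?thesis
    unfolding s0_series_def[of "A $ 0"] by (simp add: cubic_fps_the)
qed

lemma deriv_v_s0_series:
  fixes A B :: "'a::comm_ring_1 fps"
  defines "S \<equiv> s0_series A B"
  shows "deriv_v S = (fps_const (fps_deriv A) * S ^ 2 + fps_const (fps_deriv B) * S ^ 3) * fps_deriv S"
proof -
  define F where "F = 1 - 2 * fps_const A * S - 3 * fps_const B * S ^ 2"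
  have eq: "S = fps_X + fps_const A * (S * S) + fps_const B * (S * S * S)"
    using s0_series_fixpoint[of A B] by (simp add: S_def power2_eq_square power3_eq_cube)
  then have "deriv_v S = deriv_v (fps_X + fps_const A * (S * S) + fps_const B * (S * S * S))"
    by (rule arg_cong)
  then have "deriv_v S * F = fps_const (fps_deriv A) * S ^ 2 + fps_const (fps_deriv B) * S ^ 3"
    by (simp add: F_def deriv_v_add deriv_v_mult deriv_v_fps_X deriv_v_fps_const
        algebra_simps power2_eq_square power3_eq_cube)
  moreover have "fps_deriv S * F = 1"
  proof -
    have "fps_deriv S = fps_deriv (fps_X + fps_const A * (S * S) + fps_const B * (S * S * S))"
      using eq by (rule arg_cong)
    then show ?thesis
      by (simp add: F_def algebra_simps power2_eq_square)
  qed
  ultimately show ?thesis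
    by (metis mult.assoc mult.commute mult_1_right)
qed

theorem mainTheorem8:
  fixes \<alpha> \<beta> c3 c6 :: "'a::comm_ring_1"
  defines "s \<equiv> tate_s 0 0 (fps_const \<alpha> * fps_X + fps_const c3) 0
                         (fps_const \<beta> * fps_X + fps_const c6)"
  shows "\<exists>S :: 'a fps fps.
           s = fps_compose S (fps_X ^ 3) \<and>
           deriv_v S = (fps_const (fps_const \<alpha>) * S ^ 2 + fps_const (fps_const \<beta>) * S ^ 3)
                         * fps_deriv S \<and>
           at_v0 S = s0_series c3 c6"
proof (intro exI conjI)
  let ?S = "s0_series (fps_const \<alpha> * fps_X + fps_const c3) (fps_const \<beta> * fps_X + fps_const c6)"
  show "s = ?S oo fps_X ^ 3"
    unfolding s_def by (rule tate_s_eq_s0_series_compose)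
  show "deriv_v ?S = (fps_const (fps_const \<alpha>) * ?S ^ 2 + fps_const (fps_const \<beta>) * ?S ^ 3) * fps_deriv ?S"
    using deriv_v_s0_series[of "fps_const \<alpha> * fps_X + fps_const c3" "fps_const \<beta> * fps_X + fps_const c6"]
    by simp
  show "at_v0 ?S = s0_series c3 c6"
    using at_v0_s0_series[of "fps_const \<alpha> * fps_X + fps_const c3" "fps_const \<beta> * fps_X + fps_const c6"]
    by simp
qed

end
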